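(* Let $m$ be a tour with core $K$. If $\theta_1\in\mathbb{S}^1$ and $z\in\partial K\cap D(\theta_1)$, then $z=m(\theta_1)$.
   Context: Write $\mathbb{S}^1=\mathbb{R}/2\pi\mathbb{Z}$, $u(\theta)=(\cos\theta,\sin\theta)$ and $u^\perp(\theta)=(-\sin\theta,\cos\theta)$. A ruled function $R:\mathbb{S}^1\to\mathbb{R}$ is one having a left limit $R_l(\theta)$ and a right limit $R_r(\theta)$ at every point. A tour is a continuous map $m:\mathbb{S}^1\to\mathbb{R}^2$ such that: - $m$ has left and right derivatives at every point; - there is a ruled function $R$ with $m'_l(\theta)=R_l(\theta)u(\theta)$ and $m'_r(\theta)=R_r(\theta)u(\theta)$. For each $\theta$, $D(\theta)=m(\theta)+\mathbb{R}u(\theta)$ is the line oriented by $u(\theta)$, and $D^+(\theta)=\{x:\langle x-m(\theta),u^\perp(\theta)\rangle\ge0\}$ is its closed left half-plane. The core of the tour is $K=\bigcap_{\theta}D^+(\theta)$. *)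

theory Defs
  imports "HOL-Analysis.Analysis"
begin

text \<open>S^1 = R / 2 pi Z is modelled by 2 pi-periodic functions on the reals.\<close>

definition u :: "real \<Rightarrow> real \<times> real" where
  "u \<theta> = (cos \<theta>, sin \<theta>)"

definition uperp :: "real \<Rightarrow> real \<times> real" where
  "uperp \<theta> = (- sin \<theta>, cos \<theta>)"

definition ruled :: "(real \<Rightarrow> real) \<Rightarrow> bool" where
  "ruled R \<longleftrightarrow> (\<forall>\<theta>. R (\<theta> + 2 * pi) = R \<theta>) \<and>
     (\<forall>\<theta>. (\<exists>l. (R \<longlongrightarrow> l) (at_left \<theta>)) \<and> (\<exists>r. (R \<longlongrightarrow> r) (at_right \<theta>)))"

definition tour :: "(real \<Rightarrow> real \<times> real) \<Rightarrow> bool" where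
  "tour m \<longleftrightarrow> (\<forall>\<theta>. m (\<theta> + 2 * pi) = m \<theta>) \<and> continuous_on UNIV m \<and>
     (\<exists>R. ruled R \<and>
        (\<forall>\<theta>. (m has_vector_derivative (Lim (at_left \<theta>) R *\<^sub>R u \<theta>)) (at_left \<theta>) \<and>
              (m has_vector_derivative (Lim (at_right \<theta>) R *\<^sub>R u \<theta>)) (at_right \<theta>)))"

definition Dline :: "(real \<Rightarrow> real \<times> real) \<Rightarrow> real \<Rightarrow> (real \<times> real) set" where
  "Dline m \<theta> = {m \<theta> + t *\<^sub>R u \<theta> | t. True}"

definition Dplus :: "(real \<Rightarrow> real \<times> real) \<Rightarrow> real \<Rightarrow> (real \<times> real) set" where
  "Dplus m \<theta> = {x. inner (x - m \<theta>) (uperp \<theta>) \<ge> 0}"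

definition core :: "(real \<Rightarrow> real \<times> real) \<Rightarrow> (real \<times> real) set" where
  "core m = (\<Inter>\<theta>. Dplus m \<theta>)"

end

theory Submission
  imports Defs
begin

text \<open>For z in the core, the signed distance f(theta) = <z - m(theta), uperp(theta)> from z to
  the line D(theta) is nonnegative, and it vanishes at theta1 when z lies on D(theta1), so theta1
  is a minimum of f. Since m' is parallel to u, both one-sided derivatives of f at theta1 equal -t,
  where z = m(theta1) + t u(theta1). At a minimum the right derivative is nonnegative and the left
  one nonpositive, hence t = 0.\<close>

lemma right_derivative_nonneg_at_local_min:
  fixes f :: "real \<Rightarrow> real"
  assumes "(f has_real_derivative D) (at_right x)"
    and "\<forall>\<^sub>F y in at_right x. f x \<le> f y"
  shows "0 \<le> D"
proof (rule tendsto_lowerbound)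
  show "((\<lambda>y. (f y - f x) / (y - x)) \<longlongrightarrow> D) (at_right x)"
    using assms(1) by (simp add: has_field_derivative_iff)
  show "\<forall>\<^sub>F y in at_right x. 0 \<le> (f y - f x) / (y - x)"
    using assms(2) eventually_at_right_less[of x] by eventually_elim simp
qed simp

lemma left_derivative_nonpos_at_local_min:
  fixes f :: "real \<Rightarrow> real"
  assumes "(f has_real_derivative D) (at_left x)"
    and "\<forall>\<^sub>F y in at_left x. f x \<le> f y"
  shows "D \<le> 0"
proof (rule tendsto_upperbound)
  show "((\<lambda>y. (f y - f x) / (y - x)) \<longlongrightarrow> D) (at_left x)"
    using assms(1) by (simp add: has_field_derivative_iff)
  have "\<forall>\<^sub>F y in at_left x. y < x"
    unfolding eventually_at_filter by simp
  then show "\<forall>\<^sub>F y in at_left x. (f y - f x) / (y - x) \<le> 0"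
    using assms(2) by eventually_elim (simp add: divide_nonneg_neg)
qed simp

lemma inner_u_uperp [simp]: "inner (u \<theta>) (uperp \<theta>) = 0"
  by (simp add: u_def uperp_def inner_Pair)

lemma inner_u_u [simp]: "inner (u \<theta>) (u \<theta>) = 1"
  by (simp add: u_def inner_Pair flip: power2_eq_square)

lemma uperp_has_vector_derivative: "(uperp has_vector_derivative - u \<theta>) (at \<theta> within S)"
  unfolding uperp_def u_def
  by (auto intro!: derivative_eq_intros simp flip: has_real_derivative_iff_has_vector_derivative)

text \<open>The rotation of uperp is the only contribution: the term from m' vanishes since m' \<parallel> u.\<close>
lemma signed_distance_has_derivative:
  assumes "(m has_vector_derivative c *\<^sub>R u \<theta>) (at \<theta> within S)"
  shows "((\<lambda>y. inner (z - m y) (uperp y)) has_real_derivative - inner (z - m \<theta>) (u \<theta>))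
           (at \<theta> within S)"
proof -
  have "((\<lambda>y. inner (z - m y) (uperp y)) has_derivative
          (\<lambda>h. inner (z - m \<theta>) (h *\<^sub>R - u \<theta>) + inner (- (h *\<^sub>R c *\<^sub>R u \<theta>)) (uperp \<theta>)))
          (at \<theta> within S)"
    using assms uperp_has_vector_derivative[of \<theta> S] unfolding has_vector_derivative_def
    by (intro has_derivative_inner derivative_eq_intros) auto
  then show ?thesis
    unfolding has_field_derivative_def
    by (rule has_derivative_eq_rhs) (auto simp: fun_eq_iff inner_minus_right)
qed

lemma core_signed_distance_nonneg: "z \<in> core m \<Longrightarrow> 0 \<le> inner (z - m \<theta>) (uperp \<theta>)"
  unfolding core_def Dplus_def by blast

lemma closed_core: "closed (core m)"
  unfolding core_def Dplus_def
  by (intro closed_INT ballI closed_Collect_le continuous_intros)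

lemma core_inter_Dline_eq:
  assumes tangent_left: "(m has_vector_derivative a *\<^sub>R u \<theta>) (at_left \<theta>)"
    and tangent_right: "(m has_vector_derivative b *\<^sub>R u \<theta>) (at_right \<theta>)"
    and "z \<in> core m" and "z \<in> Dline m \<theta>"
  shows "z = m \<theta>"
proof -
  obtain t where t: "z = m \<theta> + t *\<^sub>R u \<theta>"
    using \<open>z \<in> Dline m \<theta>\<close> unfolding Dline_def by blast
  define f where "f y = inner (z - m y) (uperp y)" for y
  have min: "f \<theta> \<le> f y" for y
    using core_signed_distance_nonneg[OF \<open>z \<in> core m\<close>] by (simp add: f_def t)
  have "inner (z - m \<theta>) (u \<theta>) = t"
    by (simp add: t)
  then have left: "(f has_real_derivative - t) (at_left \<theta>)"
    and right: "(f has_real_derivative - t) (at_right \<theta>)"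
    using signed_distance_has_derivative[OF tangent_left, of z]
      signed_distance_has_derivative[OF tangent_right, of z]
    by (simp_all add: f_def[abs_def])
  have "- t \<le> 0"
    by (rule left_derivative_nonpos_at_local_min[OF left]) (simp add: min)
  moreover have "0 \<le> - t"
    by (rule right_derivative_nonneg_at_local_min[OF right]) (simp add: min)
  ultimately show ?thesis
    by (simp add: t)
qed

theorem mainTheorem3:
  fixes m :: "real \<Rightarrow> real \<times> real" and \<theta>1 :: real and z :: "real \<times> real"
  assumes "tour m"
    and "z \<in> frontier (core m)"
    and "z \<in> Dline m \<theta>1"
  shows "z = m \<theta>1"
proof -
  obtain R where
    "(m has_vector_derivative Lim (at_left \<theta>1) R *\<^sub>R u \<theta>1) (at_left \<theta>1)"
    "(m has_vector_derivative Lim (at_right \<theta>1) R *\<^sub>R u \<theta>1) (at_right \<theta>1)"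
    using \<open>tour m\<close> unfolding tour_def by blast
  moreover have "z \<in> core m"
    using \<open>z \<in> frontier (core m)\<close> closed_core frontier_subset_closed by blast
  ultimately show ?thesis
    using core_inter_Dline_eq \<open>z \<in> Dline m \<theta>1\<close> by blast
qed

end
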